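(* Let $(\Omega(\mathcal{A}),\mathrm{d},\bar{\mathrm{d}})$ be a bidifferential graded algebra, and let $M,N\ge 1$. Let $X$ be an $N\times N$ matrix and $Y$ an $M\times N$ matrix with entries in $\mathcal{A}$, let $P$ be an $N\times N$ matrix and $R$ an $N\times N$ matrix with entries in $\mathcal{A}$, and let $Q$ be an $N\times M$ matrix with entries in $\mathcal{A}$, such that $\mathrm{d}R=0$ and $\mathrm{d}Q=0$. Suppose that $$\bar{\mathrm{d}}X=(\mathrm{d}X)\,P,\qquad \bar{\mathrm{d}}Y=(\mathrm{d}Y)\,P,\qquad R\,X+Q\,Y=X\,P,$$ and that $X$ is invertible. Then $\Phi:=Y X^{-1}$ satisfies $$\bar{\mathrm{d}}\,\mathrm{d}\,\Phi=(\mathrm{d}\Phi)\,Q\,(\mathrm{d}\Phi).$$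
   Context: $\mathcal{A}$ is a unital associative algebra over $\mathbb{C}$ with identity $I$. A bidifferential graded algebra $(\Omega(\mathcal{A}),\mathrm{d},\bar{\mathrm{d}})$ consists of a graded associative algebra $\Omega(\mathcal{A})=\bigoplus_{r\ge 0}\Omega^r(\mathcal{A})$ with $\Omega^0(\mathcal{A})=\mathcal{A}$ (each $\Omega^r(\mathcal{A})$ an $\mathcal{A}$-bimodule) together with two linear maps $\mathrm{d},\bar{\mathrm{d}}:\Omega^r(\mathcal{A})\to\Omega^{r+1}(\mathcal{A})$ satisfying the graded Leibniz rule $\mathrm{d}(\alpha\beta)=(\mathrm{d}\alpha)\beta+(-1)^r\alpha\,\mathrm{d}\beta$ for $\alpha\in\Omega^r(\mathcal{A})$ (and likewise for $\bar{\mathrm{d}}$), and $\mathrm{d}^2=\bar{\mathrm{d}}^2=0$, $\mathrm{d}\bar{\mathrm{d}}+\bar{\mathrm{d}}\mathrm{d}=0$. The maps $\mathrm{d},\bar{\mathrm{d}}$ are applied entrywise to matrices with entries in $\Omega(\mathcal{A})$, and products of such matrices use the matrix product together with the product of $\Omega(\mathcal{A})$. Inverses are taken in the algebra of square matrices over $\mathcal{A}$. *)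

theory Defs
  imports Complex_Main "Jordan_Normal_Form.Matrix"
begin

text \<open>The graded algebra Omega(A) is modelled as a unital ring 'w with a
  complex scalar multiplication making it a C-algebra, together with
  the family of homogeneous subspaces Omega r (r :: nat) whose direct sum is
  the whole of 'w.  The base algebra A is Omega 0.\<close>

definition bdga ::
  "(complex \<Rightarrow> 'w::ring_1 \<Rightarrow> 'w) \<Rightarrow> (nat \<Rightarrow> 'w set) \<Rightarrow> ('w \<Rightarrow> 'w) \<Rightarrow> ('w \<Rightarrow> 'w) \<Rightarrow> bool"
where
  "bdga scale Omega d db \<longleftrightarrow>
     \<comment> \<open>complex algebra structure\<close>
     Modules.module scale \<and>
     (\<forall>c a b. scale c (a * b) = scale c a * b \<and> scale c (a * b) = a * scale c b) \<and>
     \<comment> \<open>grading: subspaces, multiplicative, unit in degree 0, direct sum\<close>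
     (\<forall>r. Modules.module.subspace scale (Omega r)) \<and>
     (1 \<in> Omega 0) \<and>
     (\<forall>r s a b. a \<in> Omega r \<longrightarrow> b \<in> Omega s \<longrightarrow> a * b \<in> Omega (r + s)) \<and>
     (\<forall>w. \<exists>n x. (\<forall>r<n. x r \<in> Omega r) \<and> w = (\<Sum>r<n. x r)) \<and>
     (\<forall>n x. (\<forall>r<n. x r \<in> Omega r) \<and> (\<Sum>r<n. x r) = 0 \<longrightarrow> (\<forall>r<n. x r = 0)) \<and>
     \<comment> \<open>d and db: linear maps of degree +1\<close>
     (\<forall>a b. d (a + b) = d a + d b \<and> db (a + b) = db a + db b) \<and>
     (\<forall>c a. d (scale c a) = scale c (d a) \<and> db (scale c a) = scale c (db a)) \<and>
     (\<forall>r a. a \<in> Omega r \<longrightarrow> d a \<in> Omega (Suc r) \<and> db a \<in> Omega (Suc r)) \<and>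
     \<comment> \<open>graded Leibniz rule\<close>
     (\<forall>r a b. a \<in> Omega r \<longrightarrow>
        d (a * b) = d a * b + (-1) ^ r * a * d b \<and>
        db (a * b) = db a * b + (-1) ^ r * a * db b) \<and>
     \<comment> \<open>d^2 = db^2 = 0, d db + db d = 0\<close>
     (\<forall>a. d (d a) = 0 \<and> db (db a) = 0 \<and> d (db a) + db (d a) = 0)"

definition entries_in :: "'a set \<Rightarrow> nat \<Rightarrow> nat \<Rightarrow> 'a mat \<Rightarrow> bool" where
  "entries_in S m n X \<longleftrightarrow> X \<in> carrier_mat m n \<and> (\<forall>i<m. \<forall>j<n. X $$ (i, j) \<in> S)"

end

theory Submission
  imports Defs
begin

(* Write U for the inverse of X and Phi = Y U.  Both d and db act on
   matrices entrywise and satisfy the Leibniz rule (without sign) on matrices with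
   entries in the degree-0 part A = Omega 0; d satisfies it with a sign on degree-1
   entries.  Hence:
     (1) d U = - U (d X) U, so d Phi = (d Y - Phi d X) U, and likewise for db;
     (2) the linear relation R X + Q Y = X P gives P U = U (R + Q Phi) =: U T;
     (3) combining, db Phi = (d Y - Phi d X) P U = (d Phi) T;
     (4) d T = Q d Phi, because d R = d Q = 0;
     (5) d (d Phi T) = - d Phi d T, by the degree-1 Leibniz rule and d d = 0.
   Then db d Phi = - d db Phi = - d (d Phi T) = d Phi Q d Phi. *)

lemma entries_in_carrier: "entries_in S n m A \<Longrightarrow> A \<in> carrier_mat n m"
  unfolding entries_in_def by auto

lemma entries_in_map_mat:
  assumes "\<And>a. a \<in> S \<Longrightarrow> f a \<in> T" and "entries_in S n m A"
  shows "entries_in T n m (map_mat f A)"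
  using assms unfolding entries_in_def by auto

lemma map_mat_add:
  assumes "additive f" and "A \<in> carrier_mat n m" and "B \<in> carrier_mat n m"
  shows "map_mat f (A + B) = map_mat f A + map_mat f B"
  using assms by (intro eq_matI) (auto simp: additive.add)

(* Matrix Leibniz rule: if f satisfies f (a b) = f a b + sigma a f b for a in S, then
   entrywise f satisfies the same rule on products A B with A having entries in S.
   sigma = id gives derivations, sigma = uminus the degree-1 rule of d. *)
lemma map_mat_mult_twisted:
  fixes f \<sigma> :: "'a::ring_1 \<Rightarrow> 'a"
  assumes f: "additive f"
    and leibniz: "\<And>a b. a \<in> S \<Longrightarrow> f (a * b) = f a * b + \<sigma> a * f b"
    and A: "entries_in S n m A" and B: "B \<in> carrier_mat m k"
  shows "map_mat f (A * B) = map_mat f A * B + map_mat \<sigma> A * map_mat f B"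
proof (rule eq_matI)
  have cA: "A \<in> carrier_mat n m" using A by (rule entries_in_carrier)
  fix i j assume "i < dim_row (map_mat f A * B + map_mat \<sigma> A * map_mat f B)"
    and "j < dim_col (map_mat f A * B + map_mat \<sigma> A * map_mat f B)"
  then have i: "i < n" and j: "j < k" using cA B by auto
  have "map_mat f (A * B) $$ (i, j) = f (\<Sum>l<m. A $$ (i, l) * B $$ (l, j))"
    using i j cA B by (simp add: scalar_prod_def atLeast0LessThan)
  also have "\<dots> = (\<Sum>l<m. f (A $$ (i, l)) * B $$ (l, j) + \<sigma> (A $$ (i, l)) * f (B $$ (l, j)))"
    using A i by (simp add: additive.sum[OF f] leibniz entries_in_def)
  also have "\<dots> = (map_mat f A * B + map_mat \<sigma> A * map_mat f B) $$ (i, j)"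
    using i j cA B by (simp add: scalar_prod_def sum.distrib atLeast0LessThan)
  finally show "map_mat f (A * B) $$ (i, j) = (map_mat f A * B + map_mat \<sigma> A * map_mat f B) $$ (i, j)" .
qed (use A B in \<open>auto simp: entries_in_def\<close>)

definition derivation_on :: "'a::ring_1 set \<Rightarrow> ('a \<Rightarrow> 'a) \<Rightarrow> bool" where
  "derivation_on S g \<longleftrightarrow> additive g \<and> (\<forall>a\<in>S. \<forall>b. g (a * b) = g a * b + a * g b)"

lemma derivation_on_additive: "derivation_on S g \<Longrightarrow> additive g"
  unfolding derivation_on_def by blast

lemma derivation_on_one:
  assumes "derivation_on S g" and "1 \<in> S"
  shows "g 1 = 0"
proof -
  have "g (1 * 1) = g 1 * 1 + 1 * g 1" using assms unfolding derivation_on_def by blast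
  then show ?thesis by simp
qed

lemma map_mat_mult_derivation:
  assumes g: "derivation_on S g" and A: "entries_in S n m A" and B: "B \<in> carrier_mat m k"
  shows "map_mat g (A * B) = map_mat g A * B + A * map_mat g B"
proof -
  have "map_mat (\<lambda>a. a) A = A" by (intro eq_matI) auto
  with map_mat_mult_twisted[of g S "\<lambda>a. a", OF _ _ A B] g show ?thesis
    unfolding derivation_on_def by auto
qed

lemma map_mat_mult_antiderivation:
  fixes g :: "'a::ring_1 \<Rightarrow> 'a"
  assumes g: "additive g" and leibniz: "\<And>a b. a \<in> S \<Longrightarrow> g (a * b) = g a * b - a * g b"
    and A: "entries_in S n m A" and B: "B \<in> carrier_mat m k"
  shows "map_mat g (A * B) = map_mat g A * B - A * map_mat g B"
proof -
  have "map_mat uminus A = - A" by (intro eq_matI) auto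
  moreover have "map_mat g (A * B) = map_mat g A * B + map_mat uminus A * map_mat g B"
    using map_mat_mult_twisted[of g S uminus, OF g _ A B] leibniz by simp
  ultimately show ?thesis
    using entries_in_carrier[OF A] B by (simp add: minus_add_uminus_mat[of _ n k])
qed

lemma add_eq_zero_imp_uminus_mat:
  fixes A C :: "'a::ab_group_add mat"
  assumes "A \<in> carrier_mat n m" and "C \<in> carrier_mat n m" and "A + C = 0\<^sub>m n m"
  shows "C = - A"
proof (rule eq_matI)
  fix i j assume "i < dim_row (- A)" and "j < dim_col (- A)"
  then have "A $$ (i, j) + C $$ (i, j) = 0"
    using assms by (metis index_add_mat(1) index_zero_mat(1) carrier_matD index_uminus_mat(2,3))
  then show "C $$ (i, j) = (- A) $$ (i, j)"
    using assms \<open>i < _\<close> \<open>j < _\<close> by (simp add: eq_neg_iff_add_eq_0 add.commute)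
qed (use assms in auto)

lemma map_mat_one_mat:
  assumes "additive g" and "g 1 = 0"
  shows "map_mat g (1\<^sub>m n) = 0\<^sub>m n n"
  using assms by (intro eq_matI) (auto simp: additive.zero)

lemma map_mat_inverse_derivation:
  assumes g: "derivation_on S g" and one: "1 \<in> S"
    and X: "entries_in S n n X" and U: "U \<in> carrier_mat n n"
    and XU: "X * U = 1\<^sub>m n" and UX: "U * X = 1\<^sub>m n"
  shows "map_mat g U = - (U * map_mat g X * U)"
proof -
  have cX: "X \<in> carrier_mat n n" using X by (rule entries_in_carrier)
  have "map_mat g X * U + X * map_mat g U = map_mat g (X * U)"
    using map_mat_mult_derivation[OF g X U] by simp
  also have "\<dots> = 0\<^sub>m n n"
    unfolding XU using map_mat_one_mat derivation_on_one derivation_on_additive g one by blast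
  finally have XgU: "X * map_mat g U = - (map_mat g X * U)"
    using cX U by (intro add_eq_zero_imp_uminus_mat) auto
  have "map_mat g U = U * X * map_mat g U" using UX U by simp
  also have "\<dots> = U * (X * map_mat g U)" using cX U by (simp add: assoc_mult_mat[of _ n n])
  also have "\<dots> = - (U * map_mat g X * U)"
    unfolding XgU using cX U by simp
  finally show ?thesis .
qed

lemma map_mat_quotient_derivation:
  assumes g: "derivation_on S g" and one: "1 \<in> S"
    and X: "entries_in S n n X" and U: "U \<in> carrier_mat n n"
    and XU: "X * U = 1\<^sub>m n" and UX: "U * X = 1\<^sub>m n" and Y: "entries_in S m n Y"
  shows "map_mat g (Y * U) = (map_mat g Y - Y * U * map_mat g X) * U"
proof -
  have cX: "X \<in> carrier_mat n n" and cY: "Y \<in> carrier_mat m n"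
    using X Y by (simp_all add: entries_in_carrier)
  have cgX: "map_mat g X \<in> carrier_mat n n" using cX by simp
  have cYUgX: "Y * U * map_mat g X \<in> carrier_mat m n" using cY U cgX by simp
  have "map_mat g (Y * U) = map_mat g Y * U + Y * map_mat g U"
    by (rule map_mat_mult_derivation[OF g Y U])
  also have "Y * map_mat g U = - (Y * (U * map_mat g X * U))"
    unfolding map_mat_inverse_derivation[OF g one X U XU UX] using cY U by simp
  also have "Y * (U * map_mat g X * U) = Y * U * map_mat g X * U"
    using assoc_mult_mat[OF cY U cgX] assoc_mult_mat[OF cY mult_carrier_mat[OF U cgX] U] by simp
  also have "map_mat g Y * U + - (Y * U * map_mat g X * U) = (map_mat g Y - Y * U * map_mat g X) * U"
    unfolding minus_mult_distrib_mat[OF map_carrier_mat[THEN iffD2, OF cY] cYUgX U]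
    by (rule minus_add_uminus_mat[symmetric]) (use cY U cYUgX in auto)
  finally show ?thesis .
qed

lemma inverse_conjugate_linear_system:
  fixes X P R U :: "'a::semiring_1 mat"
  assumes cX: "X \<in> carrier_mat n n" and cP: "P \<in> carrier_mat n n"
    and cR: "R \<in> carrier_mat n n" and cU: "U \<in> carrier_mat n n"
    and cY: "Y \<in> carrier_mat m n" and cQ: "Q \<in> carrier_mat n m"
    and system: "R * X + Q * Y = X * P" and XU: "X * U = 1\<^sub>m n" and UX: "U * X = 1\<^sub>m n"
  shows "P * U = U * (R + Q * (Y * U))"
proof -
  have cRX: "R * X \<in> carrier_mat n n" and cQY: "Q * Y \<in> carrier_mat n n"
    and cYU: "Y * U \<in> carrier_mat m n" using cR cX cQ cY cU by simp_all
  have "P * U = U * X * P * U" using cP cU UX by simp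
  also have "\<dots> = U * (R * X + Q * Y) * U"
    unfolding system[symmetric] assoc_mult_mat[OF cU cX cP] ..
  also have "\<dots> = U * (R * X) * U + U * (Q * Y) * U"
    unfolding mult_add_distrib_mat[OF cU cRX cQY]
    by (rule add_mult_distrib_mat[OF mult_carrier_mat[OF cU cRX] mult_carrier_mat[OF cU cQY] cU])
  also have "\<dots> = U * (R * (X * U)) + U * (Q * (Y * U))"
    unfolding assoc_mult_mat[OF cU cRX cU] assoc_mult_mat[OF cR cX cU]
      assoc_mult_mat[OF cU cQY cU] assoc_mult_mat[OF cQ cY cU] ..
  also have "\<dots> = U * (R + Q * (Y * U))"
    unfolding XU right_mult_one_mat[OF cR]
    by (rule mult_add_distrib_mat[OF cU cR mult_carrier_mat[OF cQ cYU], symmetric])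
  finally show ?thesis .
qed

locale bidifferential_graded_algebra =
  fixes scale :: "complex \<Rightarrow> 'w::ring_1 \<Rightarrow> 'w"
    and Omega :: "nat \<Rightarrow> 'w set"
    and d db :: "'w \<Rightarrow> 'w"
  assumes bdga: "bdga scale Omega d db"
begin

lemma one_in_Omega0: "1 \<in> Omega 0"
  using bdga unfolding bdga_def by blast

lemma d_additive: "additive d" and db_additive: "additive db"
  using bdga unfolding bdga_def additive_def by blast+

lemma graded_leibniz:
  assumes "a \<in> Omega r"
  shows "d (a * b) = d a * b + (-1) ^ r * a * d b" and "db (a * b) = db a * b + (-1) ^ r * a * db b"
  using bdga assms unfolding bdga_def by blast+

lemma d_derivation: "derivation_on (Omega 0) d" and db_derivation: "derivation_on (Omega 0) db"
  unfolding derivation_on_def using d_additive db_additive graded_leibniz[of _ 0] by simp_all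

lemma d_leibniz1: "a \<in> Omega 1 \<Longrightarrow> d (a * b) = d a * b - a * d b"
  using graded_leibniz(1)[of a 1 b] by simp

lemma d_raises_degree: "a \<in> Omega r \<Longrightarrow> d a \<in> Omega (Suc r)"
  using bdga unfolding bdga_def by blast

lemma d_d: "d (d a) = 0"
  using bdga unfolding bdga_def by blast

lemma db_d: "db (d a) = - d (db a)"
proof -
  have "d (db a) + db (d a) = 0" using bdga unfolding bdga_def by blast
  then show ?thesis by (simp add: eq_neg_iff_add_eq_0 add.commute)
qed

lemma module: "Modules.module scale"
  using bdga unfolding bdga_def by (elim conjE) assumption

lemma Omega_subspace: "Modules.module.subspace scale (Omega r)"
  using bdga unfolding bdga_def by (elim conjE) simp

lemma Omega_mult: "a \<in> Omega r \<Longrightarrow> b \<in> Omega s \<Longrightarrow> a * b \<in> Omega (r + s)"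
  using bdga unfolding bdga_def by (elim conjE) simp

lemma entries_in_mult:
  assumes "entries_in (Omega r) n m A" and "entries_in (Omega s) m k B"
  shows "entries_in (Omega (r + s)) n k (A * B)"
proof -
  have cA: "A \<in> carrier_mat n m" and cB: "B \<in> carrier_mat m k"
    using assms by (simp_all add: entries_in_carrier)
  have "(A * B) $$ (i, j) \<in> Omega (r + s)" if "i < n" and "j < k" for i j
  proof -
    have "(A * B) $$ (i, j) = (\<Sum>l\<in>{0..<m}. A $$ (i, l) * B $$ (l, j))"
      using that cA cB by (simp add: scalar_prod_def)
    also have "\<dots> \<in> Omega (r + s)"
      using assms that unfolding entries_in_def
      by (intro Modules.module.subspace_sum[OF module Omega_subspace] Omega_mult) auto
    finally show ?thesis .
  qed
  then show ?thesis using cA cB unfolding entries_in_def by simp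
qed

lemma entries_in_d:
  "entries_in (Omega r) n m A \<Longrightarrow> entries_in (Omega (Suc r)) n m (map_mat d A)"
  by (rule entries_in_map_mat) (rule d_raises_degree)

(* Step (5): d (d G T) = - d G d T, since d G has degree 1 and d d = 0. *)
lemma d_of_d_times:
  assumes G: "entries_in (Omega 0) n m G" and T: "T \<in> carrier_mat m k"
  shows "map_mat d (map_mat d G * T) = - (map_mat d G * map_mat d T)"
proof -
  have dG: "entries_in (Omega 1) n m (map_mat d G)"
    using entries_in_d[OF G] by simp
  have ddG: "map_mat d (map_mat d G) = 0\<^sub>m n m"
    using entries_in_carrier[OF G] by (intro eq_matI) (auto simp: d_d)
  have "map_mat d (map_mat d G * T) = map_mat d (map_mat d G) * T - map_mat d G * map_mat d T"
    by (rule map_mat_mult_antiderivation[OF d_additive d_leibniz1 dG T])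
  then show ?thesis
    unfolding ddG using entries_in_carrier[OF G] T by (intro eq_matI) auto
qed

lemma bar_d_of_quotient:
  assumes X: "entries_in (Omega 0) N N X" and Y: "entries_in (Omega 0) M N Y"
    and cP: "P \<in> carrier_mat N N" and cR: "R \<in> carrier_mat N N" and cQ: "Q \<in> carrier_mat N M"
    and U: "U \<in> carrier_mat N N"
    and dbX: "map_mat db X = map_mat d X * P" and dbY: "map_mat db Y = map_mat d Y * P"
    and system: "R * X + Q * Y = X * P"
    and XU: "X * U = 1\<^sub>m N" and UX: "U * X = 1\<^sub>m N"
  shows "map_mat db (Y * U) = map_mat d (Y * U) * (R + Q * (Y * U))"
proof -
  have cX: "X \<in> carrier_mat N N" and cY: "Y \<in> carrier_mat M N"
    using X Y by (simp_all add: entries_in_carrier)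
  have cT: "R + Q * (Y * U) \<in> carrier_mat N N"
    using cR cQ cY U by (metis add_carrier_mat mult_carrier_mat)
  define A where "A = map_mat d Y - Y * U * map_mat d X"
  have cA: "A \<in> carrier_mat M N" using cY U cX unfolding A_def by (simp add: minus_carrier_mat)
  have dPhi: "map_mat d (Y * U) = A * U"
    unfolding A_def by (rule map_mat_quotient_derivation[OF d_derivation one_in_Omega0 X U XU UX Y])
  have "map_mat db (Y * U) = (map_mat d Y * P - Y * U * (map_mat d X * P)) * U"
    using map_mat_quotient_derivation[OF db_derivation one_in_Omega0 X U XU UX Y]
    unfolding dbX dbY .
  also have "map_mat d Y * P - Y * U * (map_mat d X * P) = A * P"
  proof -
    have cYU: "Y * U \<in> carrier_mat M N" and cdX: "map_mat d X \<in> carrier_mat N N"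
      and cdY: "map_mat d Y \<in> carrier_mat M N" using cY U cX by simp_all
    show ?thesis
      unfolding A_def minus_mult_distrib_mat[OF cdY mult_carrier_mat[OF cYU cdX] cP]
        assoc_mult_mat[OF cYU cdX cP] ..
  qed
  also have "A * P * U = A * (U * (R + Q * (Y * U)))"
    using assoc_mult_mat[OF cA cP U] inverse_conjugate_linear_system[OF cX cP cR U cY cQ system XU UX]
    by simp
  also have "\<dots> = map_mat d (Y * U) * (R + Q * (Y * U))"
    unfolding dPhi using assoc_mult_mat[OF cA U cT] by simp
  finally show ?thesis .
qed

lemma d_of_transfer_matrix:
  assumes cR: "R \<in> carrier_mat N N" and Q: "entries_in (Omega 0) N M Q"
    and cPhi: "Phi \<in> carrier_mat M N"
    and dR: "map_mat d R = 0\<^sub>m N N" and dQ: "map_mat d Q = 0\<^sub>m N M"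
  shows "map_mat d (R + Q * Phi) = Q * map_mat d Phi"
proof -
  have cQ: "Q \<in> carrier_mat N M" using Q by (rule entries_in_carrier)
  have "map_mat d (R + Q * Phi) = map_mat d R + (map_mat d Q * Phi + Q * map_mat d Phi)"
    using map_mat_add[OF d_additive cR] map_mat_mult_derivation[OF d_derivation Q cPhi] cQ cPhi
    by simp
  then show ?thesis unfolding dR dQ using cQ cPhi by simp
qed

lemma map_mat_db_d: "map_mat db (map_mat d A) = - map_mat d (map_mat db A)"
  by (intro eq_matI) (auto simp: db_d)

end

theorem theorem1:
  fixes scale :: "complex \<Rightarrow> 'w::ring_1 \<Rightarrow> 'w"
    and Omega :: "nat \<Rightarrow> 'w set"
    and d db :: "'w \<Rightarrow> 'w"
    and M N :: nat
    and X P R Xinv :: "'w mat" and Y Q :: "'w mat"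
  assumes "bdga scale Omega d db"
    and "M \<ge> 1" and "N \<ge> 1"
    and "entries_in (Omega 0) N N X"
    and "entries_in (Omega 0) M N Y"
    and "entries_in (Omega 0) N N P"
    and "entries_in (Omega 0) N N R"
    and "entries_in (Omega 0) N M Q"
    and "map_mat d R = 0\<^sub>m N N"
    and "map_mat d Q = 0\<^sub>m N M"
    and "map_mat db X = map_mat d X * P"
    and "map_mat db Y = map_mat d Y * P"
    and "R * X + Q * Y = X * P"
    and "entries_in (Omega 0) N N Xinv"
    and "X * Xinv = 1\<^sub>m N" and "Xinv * X = 1\<^sub>m N"
  shows "map_mat db (map_mat d (Y * Xinv))
           = map_mat d (Y * Xinv) * Q * map_mat d (Y * Xinv)"
proof -
  interpret bidifferential_graded_algebra scale Omega d db
    by (rule bidifferential_graded_algebra.intro) (fact assms(1))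
  define Phi where "Phi = Y * Xinv"
  define T where "T = R + Q * Phi"
  have carriers: "P \<in> carrier_mat N N" "R \<in> carrier_mat N N" "Q \<in> carrier_mat N M"
    "Xinv \<in> carrier_mat N N" using assms(6-8,14) by (simp_all add: entries_in_carrier)
  have Phi: "entries_in (Omega 0) M N Phi"
    using entries_in_mult[OF assms(5,14)] unfolding Phi_def by simp
  have cPhi: "Phi \<in> carrier_mat M N" and cdPhi: "map_mat d Phi \<in> carrier_mat M N"
    using Phi by (simp_all add: entries_in_carrier)
  have cT: "T \<in> carrier_mat N N"
    using carriers cPhi unfolding T_def by (metis add_carrier_mat mult_carrier_mat)
  have bar_d_Phi: "map_mat db Phi = map_mat d Phi * T"
    unfolding Phi_def T_def
    by (rule bar_d_of_quotient[OF assms(4,5) carriers assms(11-13,15,16)])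
  have d_T: "map_mat d T = Q * map_mat d Phi"
    unfolding T_def by (rule d_of_transfer_matrix[OF carriers(2) assms(8) cPhi assms(9,10)])
  have "map_mat db (map_mat d Phi) = - map_mat d (map_mat db Phi)"
    by (rule map_mat_db_d)
  also have "\<dots> = map_mat d Phi * (Q * map_mat d Phi)"
    unfolding bar_d_Phi d_of_d_times[OF Phi cT] d_T by simp
  also have "\<dots> = map_mat d Phi * Q * map_mat d Phi"
    using assoc_mult_mat[OF cdPhi carriers(3) cdPhi] by simp
  finally show ?thesis unfolding Phi_def .
qed

end
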